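(* Let $S(x)=0$ be an arbitrary smooth closed surface in ${\bf R}^n$. Then there exists a stationary (time-independent) Lorentzian metric on ${\bf R}^n\times{\bf R}$, with inverse tensor $[g^{jk}(x)]_{j,k=0}^n$, such that $S=0$ is an ergosphere of this metric and $\{S(x)=0\}\times{\bf R}$ is an event horizon.
   Context: Coordinates $(x_0,x)$, $x_0$ time, $x\in{\bf R}^n$; the metric has signature $(1,-1,\dots,-1)$ and $g^{00}>0$. The ergosphere is the set where $g_{00}(x)=0$, equivalently where $\det[g^{jk}(x)]_{j,k=1}^n=0$. A closed smooth surface $S_0(x)=0$ gives an event horizon $\{S_0=0\}\times{\bf R}$ if it is characteristic, i.e. $\sum_{j,k=1}^n g^{jk}S_{0x_j}S_{0x_k}=0$ on $S_0=0$, and $\sum_{j=1}^n g^{0j}S_{0x_j}\neq0$ on $S_0=0$ (with $S_{0x}$ the outward normal; the interior is then a black hole if this sum is negative and a white hole if positive). *)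

theory Defs
  imports "HOL-Analysis.Analysis"
begin

coinductive smooth :: "('a::real_normed_vector \<Rightarrow> 'b::real_normed_vector) \<Rightarrow> bool" where
  smoothI: "(\<forall>x. f differentiable (at x)) \<Longrightarrow>
     (\<forall>v. smooth (\<lambda>x. frechet_derivative f (at x) v)) \<Longrightarrow> smooth f"

definition grad :: "(real^'n::finite \<Rightarrow> real) \<Rightarrow> real^'n \<Rightarrow> real^'n" where
  "grad S x = (\<chi> j. frechet_derivative S (at x) (axis j 1))"

definition smooth_closed_surface :: "(real^'n::finite \<Rightarrow> real) \<Rightarrow> bool" where
  "smooth_closed_surface S \<longleftrightarrow> smooth S \<and> {x. S x = 0} \<noteq> {} \<and>
     compact {x. S x = 0} \<and> connected {x. S x = 0} \<and>
     (\<forall>x. S x = 0 \<longrightarrow> grad S x \<noteq> 0)"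

text \<open>Index None plays the role of the time index 0; Some j is the space index j.
  A symmetric matrix has signature (1,-1,...,-1) iff it is congruent to
  diag(1,-1,...,-1).\<close>
definition lorentz_diag :: "real^('n::finite option)^('n option)" where
  "lorentz_diag = (\<chi> i k. if i = k then (if i = None then 1 else -1) else 0)"

definition lorentzian_signature :: "real^('n::finite option)^('n option) \<Rightarrow> bool" where
  "lorentzian_signature M \<longleftrightarrow> transpose M = M \<and>
     (\<exists>P :: real^('n option)^('n option). invertible P \<and> transpose P ** M ** P = (lorentz_diag :: real^('n option)^('n option)))"

definition spatial_block :: "real^('n::finite option)^('n option) \<Rightarrow> real^'n^'n" where
  "spatial_block M = (\<chi> j k. M $ Some j $ Some k)"

definition mixed_row :: "real^('n::finite option)^('n option) \<Rightarrow> real^'n" where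
  "mixed_row M = (\<chi> j. M $ None $ Some j)"

text \<open>Stationary Lorentzian metric, given by its inverse tensor g(x) = [g^{jk}(x)], j,k=0..n.\<close>
definition stationary_lorentzian :: "(real^'n \<Rightarrow> real^('n::finite option)^('n option)) \<Rightarrow> bool" where
  "stationary_lorentzian g \<longleftrightarrow> smooth g \<and>
     (\<forall>x. lorentzian_signature (g x) \<and> g x $ None $ None > 0)"

text \<open>Ergosphere: the set where g_00 = 0, equivalently det [g^{jk}]_{j,k=1..n} = 0.\<close>
definition ergosphere :: "(real^'n \<Rightarrow> real^('n::finite option)^('n option)) \<Rightarrow> (real^'n) set" where
  "ergosphere g = {x. det (spatial_block (g x)) = 0}"

definition event_horizon :: "(real^'n \<Rightarrow> real^('n::finite option)^('n option)) \<Rightarrow> (real^'n::finite \<Rightarrow> real) \<Rightarrow> bool" where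
  "event_horizon g S \<longleftrightarrow> (\<forall>x. S x = 0 \<longrightarrow>
      grad S x \<bullet> (spatial_block (g x) *v grad S x) = 0 \<and>
      mixed_row (g x) \<bullet> grad S x \<noteq> 0)"

end

theory Submission
  imports Defs
begin

text \<open>Take w = grad S and L = |grad S|^2 + S^2, which is positive everywhere because
  the gradient does not vanish on S = 0, and put g^00 = 1, g^0j = w_j,
  g^jk = w_j w_k - L delta_jk. This is diag(1, -L, ..., -L) transformed by the shear
  x_0 \<mapsto> x_0 + w \<bullet> x, hence Lorentzian. Its spatial block w w^T - L I acts as -L on
  the orthogonal complement of w and as |w|^2 - L = -S^2 on w, so its determinant vanishes
  exactly on S = 0; moreover grad S \<bullet> (w w^T - L I) grad S = -S^2 |grad S|^2 vanishes there,
  while g^0j S_x_j = |grad S|^2 does not.\<close>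

lemma smoothD:
  assumes "smooth f"
  shows "f differentiable (at x)" and "smooth (\<lambda>x. frechet_derivative f (at x) v)"
  using assms by (auto elim: smooth.cases)

lemma smooth_has_derivative:
  "smooth f \<Longrightarrow> (f has_derivative frechet_derivative f (at x)) (at x)"
  using smoothD(1) frechet_derivative_works by blast

lemma directional_derivative_eq:
  assumes "\<And>x. (f has_derivative D x) (at x)"
  shows "(\<lambda>x. frechet_derivative f (at x) v) = (\<lambda>x. D x v)"
proof -
  have "frechet_derivative f (at x) = D x" for x
    using assms[of x] by (rule frechet_derivative_at[symmetric])
  then show ?thesis by simp
qed

lemma smooth_coinduct:
  assumes "P f"
    and "\<And>f. P f \<Longrightarrow> (\<forall>x. f differentiable (at x)) \<and> (\<forall>v. P (\<lambda>x. frechet_derivative f (at x) v))"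
  shows "smooth f"
  using assms(1) by (rule smooth.coinduct[of P]) (use assms(2) in blast)

lemma smooth_const: "smooth (\<lambda>x. c)"
proof (rule smooth_coinduct[where P = "\<lambda>f. \<exists>c. f = (\<lambda>x. c)"])
  fix f :: "'a \<Rightarrow> 'b"
  assume "\<exists>c. f = (\<lambda>x. c)"
  then obtain c where f: "f = (\<lambda>x. c)" by blast
  have "(\<lambda>x. frechet_derivative f (at x) v) = (\<lambda>x. 0)" for v
    unfolding f by (rule directional_derivative_eq) (rule has_derivative_const)
  then show "(\<forall>x. f differentiable (at x)) \<and> (\<forall>v. \<exists>c. (\<lambda>x. frechet_derivative f (at x) v) = (\<lambda>x. c))"
    unfolding f by auto
qed blast

lemma smooth_add:
  assumes "smooth f" "smooth g"
  shows "smooth (\<lambda>x. f x + g x)"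
proof (rule smooth_coinduct[where P = "\<lambda>h. \<exists>f g. smooth f \<and> smooth g \<and> h = (\<lambda>x. f x + g x)"])
  fix h :: "'a \<Rightarrow> 'b"
  assume "\<exists>f g. smooth f \<and> smooth g \<and> h = (\<lambda>x. f x + g x)"
  then obtain f g where fg: "smooth f" "smooth g" and h: "h = (\<lambda>x. f x + g x)" by blast
  have deriv: "(h has_derivative (\<lambda>v. frechet_derivative f (at x) v + frechet_derivative g (at x) v)) (at x)" for x
    unfolding h using fg by (intro has_derivative_add smooth_has_derivative)
  then have "h differentiable (at x)" for x by (rule differentiableI)
  moreover have "\<exists>f g. smooth f \<and> smooth g \<and> (\<lambda>x. frechet_derivative h (at x) v) = (\<lambda>x. f x + g x)" for v
    unfolding directional_derivative_eq[OF deriv] using fg by (blast intro: smoothD(2))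
  ultimately show "(\<forall>x. h differentiable (at x)) \<and>
      (\<forall>v. \<exists>f g. smooth f \<and> smooth g \<and> (\<lambda>x. frechet_derivative h (at x) v) = (\<lambda>x. f x + g x))"
    by blast
qed (use assms in blast)

lemma smooth_sum:
  "(\<And>i. i \<in> A \<Longrightarrow> smooth (f i)) \<Longrightarrow> smooth (\<lambda>x. \<Sum>i\<in>A. f i x)"
  by (induction A rule: infinite_finite_induct) (simp_all add: smooth_const smooth_add)

lemma smooth_bounded_linear_comp:
  assumes "bounded_linear L" "smooth f"
  shows "smooth (\<lambda>x. L (f x))"
proof (rule smooth_coinduct[where P = "\<lambda>h. \<exists>f. smooth f \<and> h = (\<lambda>x. L (f x))"])
  fix h
  assume "\<exists>f. smooth f \<and> h = (\<lambda>x. L (f x))"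
  then obtain f where f: "smooth f" and h: "h = (\<lambda>x. L (f x))" by blast
  have deriv: "(h has_derivative (\<lambda>v. L (frechet_derivative f (at x) v))) (at x)" for x
    unfolding h using assms(1) f by (rule bounded_linear.has_derivative[OF _ smooth_has_derivative])
  then have "h differentiable (at x)" for x by (rule differentiableI)
  moreover have "\<exists>f. smooth f \<and> (\<lambda>x. frechet_derivative h (at x) v) = (\<lambda>x. L (f x))" for v
    unfolding directional_derivative_eq[OF deriv] using f by (blast intro: smoothD(2))
  ultimately show "(\<forall>x. h differentiable (at x)) \<and>
      (\<forall>v. \<exists>f. smooth f \<and> (\<lambda>x. frechet_derivative h (at x) v) = (\<lambda>x. L (f x)))"
    by blast
qed (use assms in blast)

lemma smooth_minus: "smooth f \<Longrightarrow> smooth (\<lambda>x. - f x)"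
  by (rule smooth_bounded_linear_comp[OF bounded_linear_minus[OF bounded_linear_ident]])

lemma smooth_diff: "smooth f \<Longrightarrow> smooth g \<Longrightarrow> smooth (\<lambda>x. f x - g x)"
  unfolding diff_conv_add_uminus by (intro smooth_add smooth_minus)

lemma smooth_componentwise:
  fixes f :: "'a::real_normed_vector \<Rightarrow> 'b::euclidean_space"
  assumes "\<And>b. b \<in> Basis \<Longrightarrow> smooth (\<lambda>x. f x \<bullet> b)"
  shows "smooth f"
proof -
  have "smooth (\<lambda>x. \<Sum>b\<in>Basis. (f x \<bullet> b) *\<^sub>R b)"
    using assms by (intro smooth_sum smooth_bounded_linear_comp[OF bounded_linear_scaleR_left])
  then show ?thesis by (simp add: euclidean_representation)
qed

lemma smooth_cart:
  fixes f :: "'a::real_normed_vector \<Rightarrow> 'b::euclidean_space^'m"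
  assumes "\<And>i. smooth (\<lambda>x. f x $ i)"
  shows "smooth f"
proof (rule smooth_componentwise)
  fix b :: "'b^'m"
  assume "b \<in> Basis"
  then obtain i u where "u \<in> Basis" "b = axis i u" by (auto simp: Basis_vec_def)
  then have "(\<lambda>x. f x \<bullet> b) = (\<lambda>x. f x $ i \<bullet> u)" by (simp add: inner_axis)
  then show "smooth (\<lambda>x. f x \<bullet> b)"
    using assms by (simp add: smooth_bounded_linear_comp[OF bounded_linear_inner_left])
qed

text \<open>The derivative of a product is a sum of products, so smoothness of products is
  proved by coinduction over this closure rather than over products alone.\<close>

inductive smooth_algebra_closure :: "('a::real_normed_vector \<Rightarrow> 'b::real_normed_algebra) \<Rightarrow> bool" where
  smooth: "smooth f \<Longrightarrow> smooth_algebra_closure f"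
| add: "smooth_algebra_closure f \<Longrightarrow> smooth_algebra_closure g \<Longrightarrow> smooth_algebra_closure (\<lambda>x. f x + g x)"
| mult: "smooth_algebra_closure f \<Longrightarrow> smooth_algebra_closure g \<Longrightarrow> smooth_algebra_closure (\<lambda>x. f x * g x)"

lemma smooth_algebra_closure_derivative:
  assumes "smooth_algebra_closure f"
  shows "(\<forall>x. f differentiable (at x)) \<and> (\<forall>v. smooth_algebra_closure (\<lambda>x. frechet_derivative f (at x) v))"
  using assms
proof induction
  case (smooth f)
  then show ?case by (auto intro: smoothD smooth_algebra_closure.smooth)
next
  case (add f g)
  have deriv: "((\<lambda>x. f x + g x) has_derivative
      (\<lambda>v. frechet_derivative f (at x) v + frechet_derivative g (at x) v)) (at x)" for x
    using add.IH by (intro has_derivative_add) (simp_all add: frechet_derivative_works)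
  then have "(\<lambda>x. f x + g x) differentiable (at x)" for x by (rule differentiableI)
  moreover have "smooth_algebra_closure (\<lambda>x. frechet_derivative (\<lambda>x. f x + g x) (at x) v)" for v
    unfolding directional_derivative_eq[OF deriv]
    by (rule smooth_algebra_closure.add) (use add.IH in blast)+
  ultimately show ?case by blast
next
  case (mult f g)
  have deriv: "((\<lambda>x. f x * g x) has_derivative
      (\<lambda>v. f x * frechet_derivative g (at x) v + frechet_derivative f (at x) v * g x)) (at x)" for x
    using mult.IH by (intro has_derivative_mult) (simp_all add: frechet_derivative_works)
  then have "(\<lambda>x. f x * g x) differentiable (at x)" for x by (rule differentiableI)
  moreover have "smooth_algebra_closure (\<lambda>x. frechet_derivative (\<lambda>x. f x * g x) (at x) v)" for v
    unfolding directional_derivative_eq[OF deriv]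
    by (intro smooth_algebra_closure.add smooth_algebra_closure.mult) (use mult in blast)+
  ultimately show ?case by blast
qed

lemma smooth_mult:
  fixes f g :: "'a::real_normed_vector \<Rightarrow> 'b::real_normed_algebra"
  assumes "smooth f" "smooth g"
  shows "smooth (\<lambda>x. f x * g x)"
proof (rule smooth_coinduct[where P = smooth_algebra_closure])
  show "smooth_algebra_closure (\<lambda>x. f x * g x)"
    using assms by (intro smooth_algebra_closure.mult smooth_algebra_closure.smooth)
qed (rule smooth_algebra_closure_derivative)

lemma smooth_inner_cart:
  fixes f g :: "'a::real_normed_vector \<Rightarrow> real^'n"
  assumes "\<And>j. smooth (\<lambda>x. f x $ j)" "\<And>j. smooth (\<lambda>x. g x $ j)"
  shows "smooth (\<lambda>x. f x \<bullet> g x)"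
  unfolding inner_vec_def inner_real_def by (intro smooth_sum smooth_mult assms)

lemma smooth_grad: "smooth S \<Longrightarrow> smooth (\<lambda>x. grad S x $ j)"
  unfolding grad_def by (simp add: smoothD(2))

lemma matrix_eqI: "(\<And>i k. A $ i $ k = B $ i $ k) \<Longrightarrow> A = B"
  by (simp add: vec_eq_iff)

lemma sum_UNIV_option: "(\<Sum>i\<in>(UNIV :: 'a::finite option set). f i) = f None + (\<Sum>j\<in>UNIV. f (Some j))"
  by (subst UNIV_option_conv) (simp add: sum.reindex)

lemma det_eq_0_iff_kernel: "det (A :: real^'n^'n) = 0 \<longleftrightarrow> (\<exists>y. y \<noteq> 0 \<and> A *v y = 0)"
  using invertible_det_nz[of A] invertible_left_inverse[of A] matrix_left_invertible_ker[of A] by blast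

definition diag_mat :: "('a::finite \<Rightarrow> real) \<Rightarrow> real^'a^'a" where
  "diag_mat d = (\<chi> i k. of_bool (i = k) * d i)"

lemma diag_mat_nth [simp]: "diag_mat d $ i $ k = of_bool (i = k) * d i"
  by (simp add: diag_mat_def)

lemma mult_diag_mat_nth: "(A ** diag_mat d) $ i $ k = A $ i $ k * d k"
  by (simp add: matrix_matrix_mult_def mult.left_commute)

lemma diag_mat_mult: "diag_mat a ** diag_mat b = diag_mat (\<lambda>i. a i * b i)"
  by (simp add: vec_eq_iff mult_diag_mat_nth)

lemma diag_mat_const: "diag_mat (\<lambda>i. c) = mat c"
  by (rule matrix_eqI) (simp add: mat_def)

lemma transpose_diag_mat [simp]: "transpose (diag_mat a) = diag_mat a"
  by (rule matrix_eqI) (simp add: transpose_def)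

lemma invertible_diag_mat: "(\<And>i. a i \<noteq> 0) \<Longrightarrow> invertible (diag_mat a)"
  unfolding invertible_def
  by (rule exI[of _ "diag_mat (\<lambda>i. 1 / a i)"]) (simp add: diag_mat_mult diag_mat_const)

lemma congruent_diag_mat_nth:
  "(transpose R ** diag_mat d ** R) $ i $ k = (\<Sum>a\<in>UNIV. R $ a $ i * d a * R $ a $ k)"
proof -
  have "(transpose R ** diag_mat d) $ i $ a = R $ a $ i * d a" for a
    by (simp add: mult_diag_mat_nth transpose_def)
  then show ?thesis by (simp add: matrix_matrix_mult_def[of "transpose R ** diag_mat d" R])
qed

lemma lorentzian_signature_congruent_diag:
  fixes R :: "real^('n::finite option)^('n option)"
  assumes "invertible R" "d None > 0" "\<And>j. d (Some j) < 0"
  shows "lorentzian_signature (transpose R ** diag_mat d ** R)"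
  unfolding lorentzian_signature_def
proof
  show "transpose (transpose R ** diag_mat d ** R) = transpose R ** diag_mat d ** R"
    by (simp add: matrix_transpose_mul matrix_mul_assoc)
  obtain B where RB: "R ** B = mat 1" and BR: "B ** R = mat 1"
    using assms(1) unfolding invertible_def by blast
  define e where "e i = 1 / sqrt \<bar>d i\<bar>" for i
  have d_sign: "if i = None then d i > 0 else d i < 0" for i
    using assms(2,3) by (cases i) auto
  then have d_nz: "d i \<noteq> 0" for i
    by (metis less_irrefl)
  have inv: "invertible (B ** diag_mat e)"
    using BR RB d_nz by (intro invertible_mult invertible_diag_mat) (auto simp: invertible_def e_def)
  have "transpose (B ** diag_mat e) ** (transpose R ** diag_mat d ** R) ** (B ** diag_mat e)
      = diag_mat e ** transpose (R ** B) ** diag_mat d ** (R ** B) ** diag_mat e"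
    by (simp add: matrix_transpose_mul matrix_mul_assoc)
  also have "\<dots> = diag_mat (\<lambda>i. e i * d i * e i)"
    by (simp add: RB diag_mat_mult)
  also have "\<dots> = lorentz_diag"
  proof (rule matrix_eqI)
    fix i k
    have "e i * d i * e i = d i / \<bar>d i\<bar>"
      by (simp add: e_def real_sqrt_mult_self)
    then show "diag_mat (\<lambda>i. e i * d i * e i) $ i $ k = lorentz_diag $ i $ k"
      using d_sign[of i] by (auto simp: lorentz_diag_def split: if_splits)
  qed
  finally show "\<exists>P :: real^('n option)^('n option). invertible P \<and> transpose P ** (transpose R ** diag_mat d ** R) ** P = lorentz_diag"
    using inv by blast
qed

definition time_shear :: "real^'n::finite \<Rightarrow> real^('n option)^('n option)" where
  "time_shear w = (\<chi> i k. case (i, k) of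
      (None, None) \<Rightarrow> 1 | (None, Some k) \<Rightarrow> w $ k | (Some j, None) \<Rightarrow> 0
    | (Some j, Some k) \<Rightarrow> of_bool (j = k))"

lemma time_shear_nth [simp]:
  "time_shear w $ None $ None = 1" "time_shear w $ None $ Some k = w $ k"
  "time_shear w $ Some j $ None = 0" "time_shear w $ Some j $ Some k = of_bool (j = k)"
  by (simp_all add: time_shear_def)

lemma time_shear_mult: "time_shear a ** time_shear b = time_shear (a + b)"
proof (rule matrix_eqI)
  fix i k
  show "(time_shear a ** time_shear b) $ i $ k = time_shear (a + b) $ i $ k"
    by (cases i; cases k) (simp_all add: matrix_matrix_mult_def sum_UNIV_option)
qed

lemma time_shear_0: "time_shear 0 = mat 1"
proof (rule matrix_eqI)
  fix i k
  show "time_shear 0 $ i $ k = mat 1 $ i $ k"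
    by (cases i; cases k) (simp_all add: mat_def)
qed

lemma invertible_time_shear: "invertible (time_shear w)"
  unfolding invertible_def
  by (rule exI[of _ "time_shear (- w)"]) (simp add: time_shear_mult time_shear_0)

definition sheared_metric :: "real^'n::finite \<Rightarrow> real \<Rightarrow> real^('n option)^('n option)" where
  "sheared_metric w l = transpose (time_shear w) ** diag_mat (\<lambda>i. if i = None then 1 else - l) ** time_shear w"

lemma sheared_metric_nth [simp]:
  "sheared_metric w l $ None $ None = 1"
  "sheared_metric w l $ None $ Some k = w $ k"
  "sheared_metric w l $ Some j $ None = w $ j"
  "sheared_metric w l $ Some j $ Some k = w $ j * w $ k - of_bool (j = k) * l"
  by (simp_all add: sheared_metric_def congruent_diag_mat_nth sum_UNIV_option sum_negf mult.assoc)

lemma lorentzian_signature_sheared_metric: "l > 0 \<Longrightarrow> lorentzian_signature (sheared_metric w l)"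
  unfolding sheared_metric_def
  by (rule lorentzian_signature_congruent_diag) (simp_all add: invertible_time_shear)

lemma smooth_sheared_metric:
  assumes "\<And>j. smooth (\<lambda>x. w x $ j)" "smooth l"
  shows "smooth (\<lambda>x. sheared_metric (w x) (l x))"
proof (rule smooth_cart)
  fix i
  show "smooth (\<lambda>x. sheared_metric (w x) (l x) $ i)"
  proof (rule smooth_cart)
    fix k
    show "smooth (\<lambda>x. sheared_metric (w x) (l x) $ i $ k)"
      by (cases i; cases k) (simp_all add: assms smooth_const smooth_diff smooth_mult)
  qed
qed

lemma mixed_row_sheared_metric: "mixed_row (sheared_metric w l) = w"
  by (simp add: mixed_row_def vec_eq_iff)

lemma spatial_block_sheared_metric_mult:
  "spatial_block (sheared_metric w l) *v y = (w \<bullet> y) *\<^sub>R w - l *\<^sub>R y"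
proof -
  have "(\<Sum>k\<in>UNIV. (w $ j * w $ k - of_bool (j = k) * l) * y $ k) = w $ j * (w \<bullet> y) - l * y $ j" for j
    by (simp add: left_diff_distrib sum_subtractf inner_vec_def sum_distrib_left mult.assoc)
  then show ?thesis
    by (simp add: vec_eq_iff matrix_vector_mult_def spatial_block_def)
qed

lemma det_spatial_block_sheared_metric:
  assumes pos: "w \<bullet> w + s\<^sup>2 > 0"
  shows "det (spatial_block (sheared_metric w (w \<bullet> w + s\<^sup>2))) = 0 \<longleftrightarrow> s = 0"
proof
  assume "det (spatial_block (sheared_metric w (w \<bullet> w + s\<^sup>2))) = 0"
  then obtain y where y: "y \<noteq> 0" and ker: "(w \<bullet> y) *\<^sub>R w = (w \<bullet> w + s\<^sup>2) *\<^sub>R y"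
    by (auto simp: det_eq_0_iff_kernel spatial_block_sheared_metric_mult)
  have "w \<bullet> y \<noteq> 0"
    using ker y pos by auto
  moreover have "(w \<bullet> y) * (w \<bullet> w) = (w \<bullet> w + s\<^sup>2) * (w \<bullet> y)"
    using arg_cong[OF ker, of "inner w"] by simp
  ultimately show "s = 0"
    by (simp add: algebra_simps)
next
  assume "s = 0"
  then have "w \<noteq> 0" and "spatial_block (sheared_metric w (w \<bullet> w + s\<^sup>2)) *v w = 0"
    using pos by (auto simp: spatial_block_sheared_metric_mult)
  then show "det (spatial_block (sheared_metric w (w \<bullet> w + s\<^sup>2))) = 0"
    by (auto simp: det_eq_0_iff_kernel)
qed

lemma spatial_block_sheared_metric_null:
  "w \<bullet> (spatial_block (sheared_metric w (w \<bullet> w)) *v w) = 0"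
  by (simp add: spatial_block_sheared_metric_mult inner_diff_right)

theorem proposition2p5:
  fixes S :: "real^'n \<Rightarrow> real"
  assumes "smooth_closed_surface S"
  shows "\<exists>g :: real^'n \<Rightarrow> real^('n option)^('n option).
           stationary_lorentzian g \<and> ergosphere g = {x. S x = 0} \<and> event_horizon g S"
proof -
  have sS: "smooth S" and reg: "\<And>x. S x = 0 \<Longrightarrow> grad S x \<noteq> 0"
    using assms unfolding smooth_closed_surface_def by auto
  define g where "g x = sheared_metric (grad S x) (grad S x \<bullet> grad S x + (S x)\<^sup>2)" for x
  have pos: "grad S x \<bullet> grad S x + (S x)\<^sup>2 > 0" for x
    using reg[of x] by (cases "S x = 0") (simp_all add: add_pos_nonneg add_nonneg_pos)
  have "smooth g"
    unfolding g_def power2_eq_square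
    by (intro smooth_sheared_metric smooth_add smooth_inner_cart smooth_mult smooth_grad sS)
  then have "stationary_lorentzian g"
    using pos by (simp add: stationary_lorentzian_def g_def lorentzian_signature_sheared_metric)
  moreover have "ergosphere g = {x. S x = 0}"
    using pos by (simp add: ergosphere_def g_def det_spatial_block_sheared_metric)
  moreover have "event_horizon g S"
    using reg by (simp add: event_horizon_def g_def spatial_block_sheared_metric_null mixed_row_sheared_metric)
  ultimately show ?thesis by blast
qed

end
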